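(* Let $k\geq 2$ and let $\mathcal{T}$ be a generalized $k$-forest whose vertex set $V(\mathcal T)$ (the union of its edges) has $v$ elements. Then there is a tight $k$-tree $\mathcal{T}^+$ with vertex set $V(\mathcal T)$ such that every edge of $\mathcal{T}$ is an edge of $\mathcal{T}^+$.
   Context: A $k$-graph is a family of $k$-element sets (edges); its vertex set is the union of its edges. Generalized $k$-forests are defined inductively as sequences of $k$-sets: a single $k$-set $E_1$ is a generalized $k$-forest. If $\{E_1,\dots,E_u\}$ is a generalized $k$-forest with vertex set $V=E_1\cup\dots\cup E_u$, and $A_{u+1}\subseteq E_i$ for some $1\leq i\leq u$ (with $A_{u+1}$ possibly empty), and $B$ is a set with $B\cap V=\emptyset$ and $|A_{u+1}|+|B|=k$, then $\{E_1,\dots,E_u,E_{u+1}\}$ with $E_{u+1}:=A_{u+1}\cup B$ is a generalized $k$-forest; $A_{u+1}$ is called the defining set of $E_{u+1}$ (so $A_{u+1}=E_{u+1}\cap(E_1\cup\dots\cup E_u)$). A generalized $k$-forest is a generalized $k$-tree if it is connected (equivalently, all defining sets $A_2,\dots,A_{q}$ are nonempty). It is a tight $k$-forest if every defining set is either empty or has exactly $k-1$ elements, and a tight $k$-tree if it is a connected tight $k$-forest, i.e. every defining set has exactly $k-1$ elements. *)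

theory Defs
  imports Main
begin

definition verts :: "'a set list \<Rightarrow> 'a set" where
  "verts Es = \<Union> (set Es)"

inductive gen_forest :: "nat \<Rightarrow> 'a set list \<Rightarrow> bool" for k :: nat where
  single: "finite E \<Longrightarrow> card E = k \<Longrightarrow> gen_forest k [E]"
| extend: "gen_forest k Es \<Longrightarrow> i < length Es \<Longrightarrow> A \<subseteq> Es ! i \<Longrightarrow>
           finite B \<Longrightarrow> B \<inter> verts Es = {} \<Longrightarrow> card A + card B = k \<Longrightarrow>
           gen_forest k (Es @ [A \<union> B])"

inductive tight_tree :: "nat \<Rightarrow> 'a set list \<Rightarrow> bool" for k :: nat where
  single: "finite E \<Longrightarrow> card E = k \<Longrightarrow> tight_tree k [E]"
| extend: "tight_tree k Es \<Longrightarrow> i < length Es \<Longrightarrow> A \<subseteq> Es ! i \<Longrightarrow>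
           finite B \<Longrightarrow> B \<inter> verts Es = {} \<Longrightarrow> card A + card B = k \<Longrightarrow>
           card A = k - 1 \<Longrightarrow>
           tight_tree k (Es @ [A \<union> B])"

end

theory Submission
  imports Defs
begin

(* Every generalized k-forest is contained in a tight k-tree on the
   same vertex set; we prove this by induction along the construction of the
   forest.  The key step is the growth lemma tight_tree_grow: if a tight k-tree
   contains an edge F, A is a subset of F and B is a finite set of new vertices
   with |A| + |B| = k, then the tree can be extended by tight steps, using only
   the new vertices B, to a tight k-tree that also contains the edge A \<union> B.
   It is proved by induction on B: for a new vertex b, pick c \<in> F - A and add
   the tight edge (F - {c}) \<union> {b}; it contains A \<union> {b}, and the remaining
   vertices B - {b} are attached to it.  When B is empty, A already equals F.
   The main theorem then follows: a new forest edge A \<union> B with defining set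
   A \<subseteq> E_i is produced by applying the growth lemma to the tree built so far,
   which contains E_i by induction.  The argument works for every k. *)

lemma verts_append [simp]: "verts (Es @ [E]) = verts Es \<union> E"
  by (auto simp: verts_def)

lemma edge_subset_verts: "E \<in> set Es \<Longrightarrow> E \<subseteq> verts Es"
  by (auto simp: verts_def)

lemma tight_tree_edge_card:
  assumes "tight_tree k Es" and "E \<in> set Es"
  shows "finite E \<and> card E = k"
  using assms
proof (induction arbitrary: E rule: tight_tree.induct)
  case (single E)
  then show ?case by simp
next
  case (extend Es i A B)
  show ?case
  proof (cases "E \<in> set Es")
    case True
    then show ?thesis using extend.IH by blast
  next
    case False
    then have E: "E = A \<union> B" using extend.prems by simp
    have Ei: "Es ! i \<in> set Es" using extend.hyps(2) by simp
    then have "finite A" using extend.IH extend.hyps(3) finite_subset by blast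
    moreover have "A \<inter> B = {}"
      using extend.hyps(3,5) edge_subset_verts[OF Ei] by blast
    ultimately show ?thesis using E extend.hyps(4,6) by (simp add: card_Un_disjoint)
  qed
qed

lemma tight_tree_swap:
  assumes T: "tight_tree k Tp" and F: "F \<in> set Tp" and c: "c \<in> F"
    and b: "b \<notin> verts Tp"
  shows "tight_tree k (Tp @ [(F - {c}) \<union> {b}])"
proof -
  obtain i where i: "i < length Tp" "Tp ! i = F" using F by (auto simp: in_set_conv_nth)
  have "finite F" "card F = k" using tight_tree_edge_card[OF T F] by auto
  then have "card (F - {c}) = k - 1" "card (F - {c}) + card {b} = k"
    using c card_gt_0_iff[of F] by auto
  moreover have "{b} \<inter> verts Tp = {}" using b by simp
  ultimately show ?thesis
    using tight_tree.extend[OF T i(1), of "F - {c}" "{b}"] i(2) by auto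
qed

lemma tight_tree_grow:
  assumes "finite B"
  shows "\<lbrakk>tight_tree k Tp; F \<in> set Tp; A \<subseteq> F; B \<inter> verts Tp = {}; card A + card B = k\<rbrakk>
    \<Longrightarrow> \<exists>Tp'. tight_tree k Tp' \<and> verts Tp' = verts Tp \<union> B \<and> set Tp \<subseteq> set Tp'
              \<and> A \<union> B \<in> set Tp'"
  using assms
proof (induction B arbitrary: Tp F A rule: finite_induct)
  case empty
  have "finite F" "card F = k" using tight_tree_edge_card empty.prems(1,2) by blast+
  then have "A = F" using card_subset_eq[of F A] empty.prems(3,5) by simp
  then show ?case using empty.prems by auto
next
  case (insert b B)
  have fF: "finite F" "card F = k" using tight_tree_edge_card insert.prems(1,2) by blast+
  have fA: "finite A" using fF(1) insert.prems(3) finite_subset by blast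
  have "card A < card F" using insert.hyps(1,2) insert.prems(5) fF by simp
  then obtain c where c: "c \<in> F" "c \<notin> A"
    using card_mono[OF fA] by (metis not_le subsetI)
  have FV: "F \<subseteq> verts Tp" using edge_subset_verts[OF insert.prems(2)] .
  have bV: "b \<notin> verts Tp" using insert.prems(4) by blast
  define F' where "F' = (F - {c}) \<union> {b}"
  have T1: "tight_tree k (Tp @ [F'])"
    unfolding F'_def using tight_tree_swap[OF insert.prems(1,2) c(1) bV] .
  have A': "A \<union> {b} \<subseteq> F'" using insert.prems(3) c by (auto simp: F'_def)
  have dis: "B \<inter> verts (Tp @ [F']) = {}"
    using FV insert.hyps(2) insert.prems(4) by (auto simp: F'_def)
  have "b \<notin> A" using insert.prems(3) FV bV by blast
  then have cA: "card (A \<union> {b}) + card B = k"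
    using insert.hyps(1,2) insert.prems(5) fA by simp
  obtain Tp' where Tp': "tight_tree k Tp'" "verts Tp' = verts (Tp @ [F']) \<union> B"
      "set (Tp @ [F']) \<subseteq> set Tp'" "A \<union> {b} \<union> B \<in> set Tp'"
    using insert.IH[OF T1 _ A' dis cA] by auto
  have "verts (Tp @ [F']) \<union> B = verts Tp \<union> insert b B"
    using FV by (auto simp: F'_def)
  with Tp' show ?case by auto
qed

theorem proposition3p1:
  fixes k :: nat and T :: "'a set list"
  assumes "k \<ge> 2" and "gen_forest k T"
  shows "\<exists>Tp :: 'a set list. tight_tree k Tp \<and> verts Tp = verts T \<and> set T \<subseteq> set Tp"
  using assms(2)
proof (induction rule: gen_forest.induct)
  case (single E)
  then have "tight_tree k [E]" by (rule tight_tree.single)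
  then show ?case by auto
next
  case (extend Es i A B)
  obtain Tp where Tp: "tight_tree k Tp" "verts Tp = verts Es" "set Es \<subseteq> set Tp"
    using extend.IH by blast
  have Ei: "Es ! i \<in> set Tp" using extend.hyps(2) Tp(3) by auto
  obtain Tp' where Tp': "tight_tree k Tp'" "verts Tp' = verts Tp \<union> B"
      "set Tp \<subseteq> set Tp'" "A \<union> B \<in> set Tp'"
    using tight_tree_grow[OF extend.hyps(4) Tp(1) Ei extend.hyps(3) _ extend.hyps(6)]
      extend.hyps(5) Tp(2) by auto
  have "A \<subseteq> verts Es"
    using extend.hyps(2,3) edge_subset_verts[of "Es ! i" Es] by auto
  then have "verts Tp' = verts (Es @ [A \<union> B])" using Tp'(2) Tp(2) by auto
  moreover have "set (Es @ [A \<union> B]) \<subseteq> set Tp'" using Tp'(3,4) Tp(3) by auto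
  ultimately show ?case using Tp'(1) by blast
qed

end
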